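(* Let $\Gamma$ be an $n$-dimensional Bieberbach group with cyclic holonomy group $G$ of square-free order $\delta$ and translation subgroup $M$. Then $M=M_{n-1}\oplus\mathbb{Z}$ as $\mathbb{Z}G$-modules, where $\mathbb{Z}$ is a trivial $\mathbb{Z}G$-module generated by the $\delta$-th power of some element $c\in\Gamma$, and $\Gamma=M_{n-1}\rtimes C$ with $C=\langle c\rangle$.
   Context: An $n$-dimensional Bieberbach group is a torsion-free group $\Gamma$ with a normal maximal abelian subgroup $M\cong\mathbb{Z}^n$ of finite index; $G=\Gamma/M$ is the holonomy group, acting faithfully on $M$ by conjugation. *)

theory Defs
  imports "HOL-Algebra.Algebra" "HOL-Algebra.Free_Abelian_Groups" "HOL-Computational_Algebra.Squarefree"
begin

definition free_abelian_of_rank :: "('a, 'b) monoid_scheme \<Rightarrow> 'a set \<Rightarrow> nat \<Rightarrow> bool" where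
  "free_abelian_of_rank G H n \<longleftrightarrow>
     subgroup H G \<and> (subgroup_generated G H \<cong> free_Abelian_group {..<n})"

definition torsion_free :: "('a, 'b) monoid_scheme \<Rightarrow> bool" where
  "torsion_free G \<longleftrightarrow>
     (\<forall>x \<in> carrier G. \<forall>k::nat. k > 0 \<and> x [^]\<^bsub>G\<^esub> k = \<one>\<^bsub>G\<^esub> \<longrightarrow> x = \<one>\<^bsub>G\<^esub>)"

definition abelian_subset :: "('a, 'b) monoid_scheme \<Rightarrow> 'a set \<Rightarrow> bool" where
  "abelian_subset G H \<longleftrightarrow> (\<forall>x \<in> H. \<forall>y \<in> H. x \<otimes>\<^bsub>G\<^esub> y = y \<otimes>\<^bsub>G\<^esub> x)"

definition maximal_abelian_subgroup :: "('a, 'b) monoid_scheme \<Rightarrow> 'a set \<Rightarrow> bool" where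
  "maximal_abelian_subgroup G M \<longleftrightarrow>
     subgroup M G \<and> abelian_subset G M \<and>
     (\<forall>H. subgroup H G \<and> abelian_subset G H \<and> M \<subseteq> H \<longrightarrow> H = M)"

definition bieberbach_group :: "('a, 'b) monoid_scheme \<Rightarrow> 'a set \<Rightarrow> nat \<Rightarrow> bool" where
  "bieberbach_group \<Gamma> M n \<longleftrightarrow>
     group \<Gamma> \<and> torsion_free \<Gamma> \<and> M \<lhd> \<Gamma> \<and> maximal_abelian_subgroup \<Gamma> M \<and>
     free_abelian_of_rank \<Gamma> M n \<and> finite (rcosets\<^bsub>\<Gamma>\<^esub> M)"

end

(*
  The lattice M = Z^n carries the action tau of a generator c of the cyclic holonomy
  group of order delta, and zeta = c^delta is a tau-fixed vector of M. Torsion-freeness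
  says that for every prime p with delta = p q, zeta is not a norm from the subgroup of
  order p generated by tau^q: otherwise (m c^q)^p = 1 for some m in M. Writing p zeta in
  a basis of the lattice of such norms, some coefficient is prime to p; composing that
  coordinate with the full norm gives a tau-invariant functional psi with p not dividing
  psi zeta. As delta is squarefree, these combine into a primitive invariant functional
  psi with psi zeta prime to delta. Then phi (m c^k) = delta psi m + k psi zeta is a
  well-defined homomorphism from Gamma onto Z whose kernel N lies in M. If phi c' = 1,
  then Gamma is the semidirect product of N and <c'>, M = N x <c'^delta>, and N, being
  isomorphic to the kernel of psi, has rank n - 1.
*)

theory Submission
  imports Defs
begin

section \<open>Additive subgroups and additive maps\<close>

definition is_add_subgroup :: "'a::ab_group_add set \<Rightarrow> bool" where
  "is_add_subgroup H \<longleftrightarrow> 0 \<in> H \<and> (\<forall>x\<in>H. \<forall>y\<in>H. x - y \<in> H)"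

lemma add_subgroup_zero: "is_add_subgroup H \<Longrightarrow> 0 \<in> H"
  by (simp add: is_add_subgroup_def)

lemma add_subgroup_diff: "is_add_subgroup H \<Longrightarrow> x \<in> H \<Longrightarrow> y \<in> H \<Longrightarrow> x - y \<in> H"
  by (simp add: is_add_subgroup_def)

lemma add_subgroup_uminus: "is_add_subgroup H \<Longrightarrow> x \<in> H \<Longrightarrow> - x \<in> H"
  using add_subgroup_diff[of H 0 x] by (simp add: add_subgroup_zero)

lemma add_subgroup_add: "is_add_subgroup H \<Longrightarrow> x \<in> H \<Longrightarrow> y \<in> H \<Longrightarrow> x + y \<in> H"
  using add_subgroup_diff[of H x "- y"] by (simp add: add_subgroup_uminus)

lemma add_subgroup_sum: "is_add_subgroup H \<Longrightarrow> (\<And>i. i \<in> I \<Longrightarrow> g i \<in> H) \<Longrightarrow> sum g I \<in> H"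
  by (induction I rule: infinite_finite_induct) (auto simp: add_subgroup_zero add_subgroup_add)

lemma add_subgroup_image:
  assumes "is_add_subgroup A"
    and "\<And>x y. x \<in> A \<Longrightarrow> y \<in> A \<Longrightarrow> h (x - y) = h x - h y"
  shows "is_add_subgroup (h ` A)"
  unfolding is_add_subgroup_def
proof (intro conjI ballI)
  show "0 \<in> h ` A"
    using assms(2)[of 0 0] add_subgroup_zero[OF assms(1)] by (metis diff_self image_eqI)
  fix u v assume "u \<in> h ` A" "v \<in> h ` A"
  then obtain x y where "x \<in> A" "y \<in> A" "u = h x" "v = h y"
    by blast
  then have "u - v = h (x - y)" "x - y \<in> A"
    using assms by (simp_all add: add_subgroup_diff)
  then show "u - v \<in> h ` A"
    by blast
qed

lemma int_add_subgroup_mult: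
  fixes S :: "int set"
  assumes S: "is_add_subgroup S" and x: "x \<in> S"
  shows "k * x \<in> S"
proof -
  have "int m * x \<in> S" for m
    by (induction m) (auto simp: add_subgroup_zero[OF S] add_subgroup_add[OF S] x distrib_right)
  moreover have "k * x = - (int (nat (- k)) * x)" if "k < 0"
    using that by simp
  ultimately show ?thesis
    using add_subgroup_uminus[OF S] by (cases "k \<ge> 0") (metis nat_0_le, metis not_le)
qed

lemma int_add_subgroup_eq_multiples:
  fixes S :: "int set"
  assumes S: "is_add_subgroup S"
  obtains d where "d \<ge> 0" "S = {x. d dvd x}"
proof (cases "S = {0}")
  case True
  then show ?thesis by (intro that[of 0]) auto
next
  case False
  from False obtain x0 where "x0 \<in> S" "x0 \<noteq> 0"
    using add_subgroup_zero[OF S] by blast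
  then have "\<bar>x0\<bar> \<in> S" "\<bar>x0\<bar> > 0"
    using add_subgroup_uminus[OF S] by (auto simp: abs_if)
  define d where "d = int (LEAST m. m > 0 \<and> int m \<in> S)"
  have "\<exists>m. m > 0 \<and> int m \<in> S"
    using \<open>\<bar>x0\<bar> \<in> S\<close> \<open>\<bar>x0\<bar> > 0\<close> by (intro exI[of _ "nat \<bar>x0\<bar>"]) simp
  then have "(LEAST m. m > 0 \<and> int m \<in> S) > 0 \<and> int (LEAST m. m > 0 \<and> int m \<in> S) \<in> S"
    by (rule LeastI_ex)
  then have d: "d > 0" "d \<in> S"
    by (simp_all add: d_def)
  have d_le: "d \<le> m" if "m > 0" "m \<in> S" for m
  proof -
    have "(LEAST m. m > 0 \<and> int m \<in> S) \<le> nat m"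
      using that by (intro Least_le) simp
    then show ?thesis
      using that by (simp add: d_def)
  qed
  have "d dvd x" if "x \<in> S" for x
  proof (rule ccontr)
    assume "\<not> d dvd x"
    then have "x mod d > 0"
      using d(1) by (simp add: dvd_eq_mod_eq_0 order_less_le)
    moreover have "x mod d \<in> S"
      using add_subgroup_diff[OF S that int_add_subgroup_mult[OF S d(2), of "x div d"]] by (simp add: minus_div_mult_eq_mod)
    ultimately show False
      using d_le[of "x mod d"] pos_mod_bound[OF d(1), of x] by simp
  qed
  moreover have "x \<in> S" if "d dvd x" for x
    using that int_add_subgroup_mult[OF S d(2)] by (auto elim!: dvdE simp: mult.commute)
  ultimately show ?thesis
    using d(1) by (intro that[of d]) auto
qed

definition additive_on :: "'a::ab_group_add set \<Rightarrow> ('a \<Rightarrow> 'b::ab_group_add) \<Rightarrow> bool" where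
  "additive_on A h \<longleftrightarrow> (\<forall>x\<in>A. \<forall>y\<in>A. h (x + y) = h x + h y)"

lemma additive_onD: "additive_on A h \<Longrightarrow> x \<in> A \<Longrightarrow> y \<in> A \<Longrightarrow> h (x + y) = h x + h y"
  by (simp add: additive_on_def)

lemma additive_on_diff:
  assumes "is_add_subgroup A" "additive_on A h" "x \<in> A" "y \<in> A"
  shows "h (x - y) = h x - h y"
  using additive_onD[OF assms(2) add_subgroup_diff[OF assms(1,3,4)] assms(4)] by simp

lemma additive_on_zero: "is_add_subgroup A \<Longrightarrow> additive_on A h \<Longrightarrow> h 0 = 0"
  using additive_on_diff[of A h 0 0] add_subgroup_zero by fastforce

lemma additive_on_uminus: "is_add_subgroup A \<Longrightarrow> additive_on A h \<Longrightarrow> x \<in> A \<Longrightarrow> h (- x) = - h x"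
  using additive_on_diff[of A h 0 x] by (simp add: add_subgroup_zero additive_on_zero)

lemma additive_on_sum:
  assumes "is_add_subgroup A" "additive_on A h" "\<And>i. i \<in> I \<Longrightarrow> g i \<in> A"
  shows "h (sum g I) = (\<Sum>i\<in>I. h (g i))"
  using assms(3)
proof (induction I rule: infinite_finite_induct)
  case (insert i I)
  then show ?case
    using assms(1,2) by (simp add: additive_onD add_subgroup_sum)
qed (simp_all add: additive_on_zero[OF assms(1,2)])

lemma additive_on_funpow:
  assumes "additive_on A h" "h ` A \<subseteq> A"
  shows "additive_on A (h ^^ j)"
proof -
  have maps: "(h ^^ i) x \<in> A" if "x \<in> A" for x i
    using that assms(2) by (induction i) auto
  show ?thesis
    unfolding additive_on_def
  proof (induction j)
    case (Suc j)
    then show ?case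
      using additive_onD[OF assms(1)] maps by simp
  qed simp
qed

section \<open>Sublattices of \<int>^n and their bases\<close>

type_synonym zvec = "nat \<Rightarrow>\<^sub>0 int"

lemma frag_cmul_of_nat: "frag_cmul (int m) x = (\<Sum>i<m. x)"
  by (induction m) (simp_all add: frag_cmul_distrib)

lemma add_subgroup_frag_cmul:
  fixes H :: "zvec set"
  assumes "is_add_subgroup H" "x \<in> H"
  shows "frag_cmul k x \<in> H"
proof -
  have "frag_cmul (int m) x \<in> H" for m
    unfolding frag_cmul_of_nat using assms by (intro add_subgroup_sum) auto
  moreover have "frag_cmul k x = - frag_cmul (int (nat (- k))) x" if "k < 0"
    using that by simp
  ultimately show ?thesis
    using add_subgroup_uminus[OF assms(1)] by (cases "k \<ge> 0") (metis nonneg_int_cases, metis not_le)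
qed

lemma additive_on_frag_cmul:
  fixes \<psi> :: "zvec \<Rightarrow> int"
  assumes "is_add_subgroup A" "additive_on A \<psi>" "x \<in> A"
  shows "\<psi> (frag_cmul k x) = k * \<psi> x"
proof -
  have nat: "\<psi> (frag_cmul (int m) x) = int m * \<psi> x" for m
    unfolding frag_cmul_of_nat using assms by (simp add: additive_on_sum del: sum_constant) simp
  show ?thesis
  proof (cases "k \<ge> 0")
    case True
    then show ?thesis using nat[of "nat k"] by simp
  next
    case False
    have "\<psi> (frag_cmul k x) = \<psi> (- frag_cmul (int (nat (- k))) x)"
      using False by simp
    also have "\<dots> = - \<psi> (frag_cmul (int (nat (- k))) x)"
      using assms by (intro additive_on_uminus add_subgroup_frag_cmul)
    finally show ?thesis
      using nat[of "nat (- k)"] False by simp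
  qed
qed

lemma additive_on_div:
  fixes \<psi> :: "zvec \<Rightarrow> int"
  assumes A: "is_add_subgroup A" and \<psi>: "additive_on A \<psi>" and image: "\<psi> ` A = {x. D dvd x}"
  shows "additive_on A (\<lambda>x. \<psi> x div D)"
proof -
  have "D dvd \<psi> x" if "x \<in> A" for x
    using image that by (metis image_eqI mem_Collect_eq)
  then show ?thesis
    using additive_onD[OF \<psi>] by (simp add: additive_on_def div_plus_div_distrib_dvd_left)
qed

lemma image_additive_on_div:
  fixes \<psi> :: "zvec \<Rightarrow> int"
  assumes A: "is_add_subgroup A" and \<psi>: "additive_on A \<psi>" and image: "\<psi> ` A = {x. D dvd x}"
    and D: "D \<noteq> 0"
  shows "(\<lambda>x. \<psi> x div D) ` A = UNIV"
proof -
  have "D \<in> \<psi> ` A"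
    using image by simp
  then obtain y where y: "y \<in> A" "\<psi> y = D"
    by (metis imageE)
  have "t \<in> (\<lambda>x. \<psi> x div D) ` A" for t
  proof (rule rev_image_eqI)
    show "frag_cmul t y \<in> A"
      by (rule add_subgroup_frag_cmul[OF A y(1)])
    show "t = \<psi> (frag_cmul t y) div D"
      using y D additive_on_frag_cmul[OF A \<psi>] by simp
  qed
  then show ?thesis
    by blast
qed

lemma frag_cmul_cancel: "k \<noteq> 0 \<Longrightarrow> frag_cmul k x = frag_cmul k y \<Longrightarrow> x = y"
  by (metis poly_mapping_eqI lookup_frag_cmul mult_cancel_left)

definition int_lattice :: "nat \<Rightarrow> zvec set" where
  "int_lattice n = carrier (free_Abelian_group {..<n})"

lemma mem_int_lattice: "x \<in> int_lattice n \<longleftrightarrow> Poly_Mapping.keys x \<subseteq> {..<n}"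
  by (simp add: int_lattice_def)

lemma add_subgroup_int_lattice: "is_add_subgroup (int_lattice n)"
  unfolding is_add_subgroup_def
proof (intro conjI ballI)
  fix x y assume "x \<in> int_lattice n" "y \<in> int_lattice n"
  then show "x - y \<in> int_lattice n"
    using keys_diff[of x y] by (auto simp: mem_int_lattice)
qed (simp add: mem_int_lattice)

lemma lookup_image_int_lattice: "n > 0 \<Longrightarrow> (\<lambda>x. Poly_Mapping.lookup x 0) ` int_lattice n = UNIV"
proof -
  assume n: "n > 0"
  have "frag_cmul t (frag_of 0) \<in> int_lattice n" for t
    using n keys_cmul[of t "frag_of 0"] unfolding mem_int_lattice keys_frag_of by auto
  then have "t \<in> (\<lambda>x. Poly_Mapping.lookup x 0) ` int_lattice n" for t
    by (rule rev_image_eqI) simp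
  then show ?thesis
    by blast
qed

lemma add_subgroup_imp_subgroup:
  assumes "is_add_subgroup H" "H \<subseteq> carrier (free_Abelian_group S)"
  shows "subgroup H (free_Abelian_group S)"
proof
  fix x y assume "x \<in> H" "y \<in> H"
  then show "x \<otimes>\<^bsub>free_Abelian_group S\<^esub> y \<in> H" "inv\<^bsub>free_Abelian_group S\<^esub> x \<in> H"
    using assms by (auto simp: add_subgroup_add add_subgroup_uminus subset_iff)
qed (use assms in \<open>auto simp: add_subgroup_zero\<close>)

definition lincomb :: "(nat \<Rightarrow> zvec) \<Rightarrow> nat \<Rightarrow> (nat \<Rightarrow> int) \<Rightarrow> zvec" where
  "lincomb b r a = (\<Sum>i<r. frag_cmul (a i) (b i))"

definition lattice_basis :: "zvec set \<Rightarrow> (nat \<Rightarrow> zvec) \<Rightarrow> nat \<Rightarrow> bool" where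
  "lattice_basis H b r \<longleftrightarrow> (\<forall>i<r. b i \<in> H) \<and> (\<forall>x\<in>H. \<exists>a. x = lincomb b r a)
     \<and> (\<forall>a. lincomb b r a = 0 \<longrightarrow> (\<forall>i<r. a i = 0))"

lemma lincomb_in: "is_add_subgroup H \<Longrightarrow> (\<And>i. i < r \<Longrightarrow> b i \<in> H) \<Longrightarrow> lincomb b r a \<in> H"
  unfolding lincomb_def by (auto intro: add_subgroup_sum add_subgroup_frag_cmul)

lemma lincomb_Suc: "lincomb b (Suc r) a = lincomb b r a + frag_cmul (a r) (b r)"
  by (simp add: lincomb_def)

lemma lincomb_add: "lincomb b r (\<lambda>i. a i + a' i) = lincomb b r a + lincomb b r a'"
  by (simp add: lincomb_def frag_cmul_distrib sum.distrib)

lemma lincomb_diff: "lincomb b r (\<lambda>i. a i - a' i) = lincomb b r a - lincomb b r a'"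
  by (simp add: lincomb_def frag_cmul_diff_distrib sum_subtractf)

lemma lincomb_cmul: "lincomb b r (\<lambda>i. k * a i) = frag_cmul k (lincomb b r a)"
  by (simp add: lincomb_def frag_cmul_sum)

lemma lincomb_cong:
  "(\<And>i. i < r \<Longrightarrow> a i = a' i) \<Longrightarrow> (\<And>i. i < r \<Longrightarrow> b i = b' i) \<Longrightarrow> lincomb b r a = lincomb b' r a'"
  by (simp add: lincomb_def)

lemma lincomb_fun_upd: "lincomb (b(r := v)) (Suc r) a = lincomb b r a + frag_cmul (a r) v"
  by (simp add: lincomb_Suc) (rule lincomb_cong, auto)

lemma add_subgroup_kernel:
  assumes "is_add_subgroup H" "additive_on H \<theta>"
  shows "is_add_subgroup {x \<in> H. \<theta> x = 0}"
  using assms by (auto simp: is_add_subgroup_def additive_on_zero additive_on_diff)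

lemma lattice_basis_extend:
  fixes \<theta> :: "zvec \<Rightarrow> int"
  assumes H: "is_add_subgroup H" and \<theta>: "additive_on H \<theta>"
    and b: "lattice_basis {x \<in> H. \<theta> x = 0} b r"
    and h: "h \<in> H" "\<theta> h \<noteq> 0" "\<And>x. x \<in> H \<Longrightarrow> \<theta> h dvd \<theta> x"
  shows "lattice_basis H (b(r := h)) (Suc r)"
  unfolding lattice_basis_def
proof (intro conjI allI impI ballI)
  fix i assume "i < Suc r"
  then show "(b(r := h)) i \<in> H"
    using b h(1) by (auto simp: lattice_basis_def less_Suc_eq)
next
  fix x assume x: "x \<in> H"
  then obtain k where k: "\<theta> x = \<theta> h * k"
    using h(3) by (meson dvdE)
  have "x - frag_cmul k h \<in> H"
    using H x h(1) by (simp add: add_subgroup_diff add_subgroup_frag_cmul)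
  moreover have "\<theta> (x - frag_cmul k h) = 0"
    using H \<theta> x h(1) k by (simp add: additive_on_diff add_subgroup_frag_cmul additive_on_frag_cmul)
  ultimately obtain a where "x - frag_cmul k h = lincomb b r a"
    using b by (auto simp: lattice_basis_def)
  then have "x = lincomb (b(r := h)) (Suc r) (a(r := k))"
    by (simp add: lincomb_fun_upd algebra_simps) (rule lincomb_cong, auto)
  then show "\<exists>a. x = lincomb (b(r := h)) (Suc r) a"
    by blast
next
  fix a i assume zero: "lincomb (b(r := h)) (Suc r) a = 0" and i: "i < Suc r"
  have kernel: "lincomb b r a \<in> {x \<in> H. \<theta> x = 0}"
    using b by (intro lincomb_in add_subgroup_kernel[OF H \<theta>]) (auto simp: lattice_basis_def)
  have "\<theta> (lincomb b r a + frag_cmul (a r) h) = 0"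
    using zero additive_on_zero[OF H \<theta>] by (simp add: lincomb_fun_upd)
  then have "a r * \<theta> h = 0"
    using kernel H \<theta> h(1) by (simp add: additive_onD add_subgroup_frag_cmul additive_on_frag_cmul)
  then have ar: "a r = 0"
    using h(2) by simp
  then have "lincomb b r a = 0"
    using zero by (simp add: lincomb_fun_upd)
  then show "a i = 0"
    using b ar i by (auto simp: lattice_basis_def less_Suc_eq)
qed

theorem lattice_basis_exists:
  "is_add_subgroup H \<Longrightarrow> H \<subseteq> int_lattice n \<Longrightarrow> \<exists>b r. lattice_basis H b r"
proof (induction n arbitrary: H)
  case 0
  then have "H = {0}"
    using add_subgroup_zero[of H] by (auto simp: mem_int_lattice)
  then have "lattice_basis H (\<lambda>_. 0) 0"
    by (simp add: lattice_basis_def lincomb_def)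
  then show ?case by blast
next
  case (Suc n)
  let ?\<theta> = "\<lambda>x. Poly_Mapping.lookup x n"
  have \<theta>: "additive_on H ?\<theta>"
    by (simp add: additive_on_def lookup_add)
  have "{x \<in> H. ?\<theta> x = 0} \<subseteq> int_lattice n"
    using Suc.prems(2) by (auto simp: mem_int_lattice subset_iff in_keys_iff less_Suc_eq)
  then obtain b r where b: "lattice_basis {x \<in> H. ?\<theta> x = 0} b r"
    using Suc.IH add_subgroup_kernel[OF Suc.prems(1) \<theta>] by blast
  have "is_add_subgroup (?\<theta> ` H)"
    using Suc.prems(1) by (rule add_subgroup_image) (simp add: lookup_minus)
  then obtain d where d: "?\<theta> ` H = {x. d dvd x}"
    by (rule int_add_subgroup_eq_multiples)
  show ?case
  proof (cases "d = 0")
    case True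
    then have "{x \<in> H. ?\<theta> x = 0} = H"
      using d by auto
    then show ?thesis
      using b by auto
  next
    case False
    obtain h where "h \<in> H" "?\<theta> h = d"
      using d by (metis dvd_refl image_iff mem_Collect_eq)
    then have "lattice_basis H (b(r := h)) (Suc r)"
      using d False by (intro lattice_basis_extend[OF Suc.prems(1) \<theta> b]) auto
    then show ?thesis by blast
  qed
qed

lemma int_lattice_interpolate: "\<exists>v \<in> int_lattice r. \<forall>i<r. Poly_Mapping.lookup v i = a i"
proof -
  define v where "v = Abs_poly_mapping (\<lambda>i. if i < r then a i else 0)"
  have "finite {i. (if i < r then a i else 0) \<noteq> 0}"
    by (rule finite_subset[of _ "{..<r}"]) auto
  then have "Poly_Mapping.lookup v = (\<lambda>i. if i < r then a i else 0)"
    by (simp add: v_def Abs_poly_mapping_inverse)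
  then show ?thesis
    by (intro bexI[of _ v]) (auto simp: mem_int_lattice in_keys_iff split: if_splits)
qed

lemma lincomb_hom:
  assumes H: "is_add_subgroup H" "H \<subseteq> carrier (free_Abelian_group S)" and b: "\<And>i. i < r \<Longrightarrow> b i \<in> H"
  shows "(\<lambda>a. lincomb b r (Poly_Mapping.lookup a))
           \<in> hom (free_Abelian_group T) (subgroup_generated (free_Abelian_group S) H)"
proof (rule homI)
  have "carrier (subgroup_generated (free_Abelian_group S) H) = H"
    using add_subgroup_imp_subgroup[OF H] by (rule subgroup.carrier_subgroup_generated_subgroup)
  then show "lincomb b r (Poly_Mapping.lookup x) \<in> carrier (subgroup_generated (free_Abelian_group S) H)"
    for x
    using lincomb_in[OF H(1) b] by simp
  fix x y :: zvec
  have "Poly_Mapping.lookup (x + y) = (\<lambda>i. Poly_Mapping.lookup x i + Poly_Mapping.lookup y i)"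
    by (simp add: fun_eq_iff lookup_add)
  then show "lincomb b r (Poly_Mapping.lookup (x \<otimes>\<^bsub>free_Abelian_group T\<^esub> y))
      = lincomb b r (Poly_Mapping.lookup x)
        \<otimes>\<^bsub>subgroup_generated (free_Abelian_group S) H\<^esub> lincomb b r (Poly_Mapping.lookup y)"
    by (simp add: lincomb_add)
qed

lemma lattice_basis_iso:
  assumes b: "lattice_basis H b r" and H: "is_add_subgroup H" "H \<subseteq> carrier (free_Abelian_group S)"
  shows "subgroup_generated (free_Abelian_group S) H \<cong> free_Abelian_group {..<r}"
proof -
  let ?F = "free_Abelian_group S" and ?R = "free_Abelian_group {..<r}"
  let ?h = "\<lambda>a. lincomb b r (Poly_Mapping.lookup a)"
  have carrier: "carrier (subgroup_generated ?F H) = H"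
    using add_subgroup_imp_subgroup[OF H] by (rule subgroup.carrier_subgroup_generated_subgroup)
  have "?h \<in> hom ?R (subgroup_generated ?F H)"
    using lincomb_hom[OF H] b by (simp add: lattice_basis_def)
  then interpret group_hom ?R "subgroup_generated ?F H" ?h
    by (simp add: group_hom_def group_hom_axioms_def group.group_subgroup_generated)
  have "?h \<in> iso ?R (subgroup_generated ?F H)"
    unfolding iso_iff
  proof (intro conjI ballI impI subsetI)
    fix x assume "x \<in> carrier (subgroup_generated ?F H)"
    then obtain a where a: "x = lincomb b r a"
      using b carrier by (auto simp: lattice_basis_def)
    obtain v where "v \<in> int_lattice r" "\<forall>i<r. Poly_Mapping.lookup v i = a i"
      using int_lattice_interpolate[of r a] ..
    then have "v \<in> carrier ?R" "?h v = x"
      unfolding a int_lattice_def by (auto intro: lincomb_cong)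
    then show "x \<in> ?h ` carrier ?R"
      by force
  next
    fix x assume x: "x \<in> carrier ?R" and "?h x = \<one>\<^bsub>subgroup_generated ?F H\<^esub>"
    then have "\<forall>i<r. Poly_Mapping.lookup x i = 0"
      using b by (simp add: lattice_basis_def subgroup_generated_def)
    moreover have "Poly_Mapping.lookup x i = 0" if "\<not> i < r" for i
      using x that by (auto simp: in_keys_iff)
    ultimately show "x = \<one>\<^bsub>?R\<^esub>"
      by (simp add: poly_mapping_eqI) (metis lookup_zero poly_mapping_eqI)
  qed
  then show ?thesis
    by (simp add: group.iso_sym is_isoI)
qed

lemma lattice_basis_coefficient_not_dvd:
  assumes H: "is_add_subgroup H" and b: "lattice_basis H b r"
    and a: "lincomb b r a = frag_cmul k x" and k: "k \<noteq> 0" and x: "x \<notin> H"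
  shows "\<exists>i<r. \<not> k dvd a i"
proof (rule ccontr)
  assume "\<not> (\<exists>i<r. \<not> k dvd a i)"
  then have "lincomb b r a = lincomb b r (\<lambda>i. k * (a i div k))"
    by (intro lincomb_cong) auto
  then have "frag_cmul k x = frag_cmul k (lincomb b r (\<lambda>i. a i div k))"
    using a by (simp add: lincomb_cmul)
  then have "x = lincomb b r (\<lambda>i. a i div k)"
    using k by (metis frag_cmul_cancel)
  moreover have "lincomb b r (\<lambda>i. a i div k) \<in> H"
    using b by (intro lincomb_in[OF H]) (simp add: lattice_basis_def)
  ultimately show False
    using x by simp
qed

lemma lattice_basis_coordinate:
  assumes b: "lattice_basis H b r" and i: "i < r"
  obtains \<mu> where "additive_on H \<mu>" "\<And>a. \<mu> (lincomb b r a) = a i"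
proof -
  define \<mu> where "\<mu> x = (SOME a. x = lincomb b r a) i" for x
  have coordinate: "\<mu> (lincomb b r a) = a i" for a
  proof -
    have "lincomb b r a = lincomb b r (SOME a'. lincomb b r a = lincomb b r a')"
      by (rule someI[where x = a]) (rule refl)
    then have "lincomb b r (\<lambda>j. (SOME a'. lincomb b r a = lincomb b r a') j - a j) = 0"
      by (simp add: lincomb_diff)
    then have "(SOME a'. lincomb b r a = lincomb b r a') i - a i = 0"
      using b i unfolding lattice_basis_def by blast
    then show ?thesis
      by (simp add: \<mu>_def)
  qed
  have "additive_on H \<mu>"
    unfolding additive_on_def
  proof (intro ballI)
    fix x y assume "x \<in> H" "y \<in> H"
    then obtain a a' where "x = lincomb b r a" "y = lincomb b r a'"
      using b by (meson lattice_basis_def)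
    then show "\<mu> (x + y) = \<mu> x + \<mu> y"
      by (simp add: coordinate flip: lincomb_add)
  qed
  then show ?thesis
    using that coordinate by blast
qed

lemma kernel_functional_iso:
  fixes \<psi> :: "zvec \<Rightarrow> int"
  assumes \<psi>: "additive_on (int_lattice n) \<psi>" and \<zeta>: "\<zeta> \<in> int_lattice n" "\<psi> \<zeta> = 1"
  shows "subgroup_generated (free_Abelian_group {..<n}) {y \<in> int_lattice n. \<psi> y = 0}
           \<cong> free_Abelian_group {..<n - 1}"
proof -
  let ?K = "{y \<in> int_lattice n. \<psi> y = 0}" and ?F = "free_Abelian_group {..<n}"
  have K: "is_add_subgroup ?K"
    by (rule add_subgroup_kernel[OF add_subgroup_int_lattice \<psi>])
  then obtain b r where b: "lattice_basis ?K b r"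
    using lattice_basis_exists by blast
  have "lattice_basis (int_lattice n) (b(r := \<zeta>)) (Suc r)"
    using \<zeta> by (intro lattice_basis_extend[OF add_subgroup_int_lattice \<psi> b]) auto
  then have "subgroup_generated ?F (carrier ?F) \<cong> free_Abelian_group {..<Suc r}"
    using lattice_basis_iso add_subgroup_int_lattice unfolding int_lattice_def by blast
  then have "{..<n} \<approx> {..<Suc r}"
    by (simp add: group.subgroup_generated_group_carrier isomorphic_free_Abelian_groups)
  then have "n = Suc r"
    by (simp add: eqpoll_iff_card)
  moreover have "subgroup_generated ?F ?K \<cong> free_Abelian_group {..<r}"
    by (rule lattice_basis_iso[OF b K]) (auto simp: int_lattice_def)
  ultimately show ?thesis
    by simp
qed

section \<open>Invariant functionals of a lattice map of finite order\<close>

lemma coprime_of_nat_if_no_common_prime: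
  fixes a :: int and b :: nat
  assumes "b \<noteq> 0" "\<And>p. Factorial_Ring.prime p \<Longrightarrow> p dvd b \<Longrightarrow> \<not> int p dvd a"
  shows "coprime a (int b)"
proof (rule coprimeI)
  fix c assume c: "c dvd a" "c dvd int b"
  show "is_unit c"
  proof (rule ccontr)
    assume "\<not> is_unit c"
    moreover have "c \<noteq> 0"
      using c(2) assms(1) by auto
    ultimately obtain P where P: "Factorial_Ring.prime P" "P dvd c"
      by (metis prime_divisorE)
    then have P_nat: "int (nat P) = P"
      by (simp add: prime_ge_0_int)
    then have "Factorial_Ring.prime (nat P)"
      using P(1) by (metis prime_int_nat_transfer)
    moreover have "nat P dvd b"
      using P(2) c(2) P_nat by (metis dvd_trans int_dvd_int_iff)
    ultimately have "\<not> P dvd a"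
      using assms(2) P_nat by metis
    then show False
      using P(2) c(1) by (blast intro: dvd_trans)
  qed
qed

lemma squarefree_prime_not_dvd_cofactor:
  assumes "squarefree (p * q)" "Factorial_Ring.prime (p :: nat)"
  shows "\<not> p dvd q"
proof
  assume "p dvd q"
  then have "p\<^sup>2 dvd p * q"
    by (simp add: power2_eq_square)
  then show False
    using assms unfolding squarefree_def by (metis not_prime_unit)
qed

locale periodic_lattice_map =
  fixes n :: nat and \<tau> :: "zvec \<Rightarrow> zvec" and \<delta> :: nat
  assumes maps_lattice: "x \<in> int_lattice n \<Longrightarrow> \<tau> x \<in> int_lattice n"
    and additive: "additive_on (int_lattice n) \<tau>"
    and periodic: "x \<in> int_lattice n \<Longrightarrow> (\<tau> ^^ \<delta>) x = x"
begin

lemma funpow_in_lattice: "x \<in> int_lattice n \<Longrightarrow> (\<tau> ^^ j) x \<in> int_lattice n"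
  by (induction j) (simp_all add: maps_lattice)

lemma additive_funpow: "additive_on (int_lattice n) (\<tau> ^^ j)"
  using additive maps_lattice by (intro additive_on_funpow) auto

lemma funpow_fixed: "\<tau> \<zeta> = \<zeta> \<Longrightarrow> (\<tau> ^^ j) \<zeta> = \<zeta>"
  by (induction j) simp_all

(* For \<delta> = p * q, the norm of the subgroup of order p generated by \<tau>^q. *)
definition orbit_sum :: "nat \<Rightarrow> nat \<Rightarrow> zvec \<Rightarrow> zvec" where
  "orbit_sum q p y = (\<Sum>i<p. (\<tau> ^^ (q * i)) y)"

lemma orbit_sum_in_lattice: "y \<in> int_lattice n \<Longrightarrow> orbit_sum q p y \<in> int_lattice n"
  unfolding orbit_sum_def by (intro add_subgroup_sum add_subgroup_int_lattice funpow_in_lattice)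

lemma additive_orbit_sum: "additive_on (int_lattice n) (orbit_sum q p)"
  unfolding additive_on_def orbit_sum_def
  using additive_onD[OF additive_funpow] by (simp add: sum.distrib)

lemma orbit_sum_fixed: "\<tau> \<zeta> = \<zeta> \<Longrightarrow> orbit_sum q p \<zeta> = frag_cmul (int p) \<zeta>"
  by (simp add: orbit_sum_def funpow_fixed frag_cmul_of_nat del: sum_constant)

definition lattice_norm :: "zvec \<Rightarrow> zvec" where
  "lattice_norm y = (\<Sum>i<\<delta>. (\<tau> ^^ i) y)"

lemma additive_lattice_norm: "additive_on (int_lattice n) lattice_norm"
  unfolding additive_on_def lattice_norm_def
  using additive_onD[OF additive_funpow] by (simp add: sum.distrib)

lemma lattice_norm_fixed: "\<tau> \<zeta> = \<zeta> \<Longrightarrow> lattice_norm \<zeta> = frag_cmul (int \<delta>) \<zeta>"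
  by (simp add: lattice_norm_def funpow_fixed frag_cmul_of_nat del: sum_constant)

lemma lattice_norm_factor:
  assumes \<delta>: "\<delta> = p * q" and y: "y \<in> int_lattice n"
  shows "lattice_norm y = orbit_sum q p (\<Sum>j<q. (\<tau> ^^ j) y)"
proof -
  have block: "(\<Sum>j\<in>{i * q..<i * q + q}. (\<tau> ^^ j) y) = (\<tau> ^^ (q * i)) (\<Sum>j<q. (\<tau> ^^ j) y)" for i
  proof -
    have "(\<Sum>j\<in>{i * q..<i * q + q}. (\<tau> ^^ j) y) = (\<Sum>j<q. (\<tau> ^^ (j + i * q)) y)"
      using sum.shift_bounds_nat_ivl[of "\<lambda>j. (\<tau> ^^ j) y" 0 "i * q" q]
      by (simp add: atLeast0LessThan add.commute)
    also have "\<dots> = (\<Sum>j<q. (\<tau> ^^ (q * i)) ((\<tau> ^^ j) y))"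
      by (intro sum.cong refl) (metis add.commute mult.commute funpow_add comp_apply)
    also have "\<dots> = (\<tau> ^^ (q * i)) (\<Sum>j<q. (\<tau> ^^ j) y)"
      using y by (intro additive_on_sum[OF add_subgroup_int_lattice additive_funpow, symmetric])
        (simp add: funpow_in_lattice)
    finally show ?thesis .
  qed
  have "lattice_norm y = (\<Sum>i<p. \<Sum>j\<in>{i * q..<i * q + q}. (\<tau> ^^ j) y)"
    unfolding lattice_norm_def by (simp add: \<delta> sum.nat_group)
  then show ?thesis
    by (simp add: block orbit_sum_def)
qed

lemma lattice_norm_shift:
  assumes "y \<in> int_lattice n"
  shows "lattice_norm (\<tau> y) = lattice_norm y"
proof -
  have "lattice_norm (\<tau> y) = (\<Sum>i<\<delta>. (\<tau> ^^ Suc i) y)"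
    by (simp add: lattice_norm_def funpow_Suc_right del: funpow.simps)
  also have "\<dots> = (\<Sum>i<\<delta>. (\<tau> ^^ i) y)"
    using sum.lessThan_Suc_shift[of "\<lambda>i. (\<tau> ^^ i) y" \<delta>] periodic[OF assms] by simp
  finally show ?thesis
    by (simp add: lattice_norm_def)
qed

lemma add_subgroup_orbit_sums: "is_add_subgroup (orbit_sum q p ` int_lattice n)"
  by (rule add_subgroup_image[OF add_subgroup_int_lattice])
    (rule additive_on_diff[OF add_subgroup_int_lattice additive_orbit_sum])

lemma lattice_norm_in_orbit_sums:
  assumes "\<delta> = p * q" "x \<in> int_lattice n"
  shows "lattice_norm x \<in> orbit_sum q p ` int_lattice n"
  using lattice_norm_factor[OF assms] assms(2) funpow_in_lattice
  by (simp add: add_subgroup_sum[OF add_subgroup_int_lattice])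

definition invariant_functional :: "(zvec \<Rightarrow> int) \<Rightarrow> bool" where
  "invariant_functional \<psi> \<longleftrightarrow> additive_on (int_lattice n) \<psi> \<and> (\<forall>x \<in> int_lattice n. \<psi> (\<tau> x) = \<psi> x)"

lemma invariant_functional_zero: "invariant_functional (\<lambda>_. 0)"
  by (simp add: invariant_functional_def additive_on_def)

lemma invariant_functional_diff:
  "invariant_functional \<psi>\<^sub>1 \<Longrightarrow> invariant_functional \<psi>\<^sub>2 \<Longrightarrow> invariant_functional (\<lambda>x. \<psi>\<^sub>1 x - \<psi>\<^sub>2 x)"
  by (simp add: invariant_functional_def additive_on_def)

lemma invariant_functional_not_dvd:
  assumes \<delta>: "\<delta> = p * q" and p: "Factorial_Ring.prime p" "\<not> p dvd q"
    and \<zeta>: "\<zeta> \<in> int_lattice n" "\<tau> \<zeta> = \<zeta>"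
    and not_norm: "\<zeta> \<notin> orbit_sum q p ` int_lattice n"
  obtains \<psi> where "invariant_functional \<psi>" "\<not> int p dvd \<psi> \<zeta>"
proof -
  let ?I = "orbit_sum q p ` int_lattice n"
  obtain b r where b: "lattice_basis ?I b r"
    using lattice_basis_exists add_subgroup_orbit_sums orbit_sum_in_lattice by blast
  have "frag_cmul (int p) \<zeta> \<in> ?I"
    using \<zeta> by (metis orbit_sum_fixed image_eqI)
  then obtain a where a: "frag_cmul (int p) \<zeta> = lincomb b r a"
    using b unfolding lattice_basis_def by blast
  have "\<exists>i<r. \<not> int p dvd a i"
    using lattice_basis_coefficient_not_dvd[OF add_subgroup_orbit_sums b a[symmetric] _ not_norm] p(1)
    by (simp add: prime_gt_0_nat)
  then obtain i where i: "i < r" "\<not> int p dvd a i"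
    by blast
  obtain \<mu> where \<mu>: "additive_on ?I \<mu>" "\<And>a. \<mu> (lincomb b r a) = a i"
    using lattice_basis_coordinate[OF b i(1)] by blast
  define \<psi> where "\<psi> x = \<mu> (lattice_norm x)" for x
  have "invariant_functional \<psi>"
    unfolding invariant_functional_def additive_on_def \<psi>_def
    using additive_onD[OF additive_lattice_norm] additive_onD[OF \<mu>(1)] lattice_norm_in_orbit_sums[OF \<delta>]
    by (simp add: lattice_norm_shift)
  moreover have "\<psi> \<zeta> = int q * a i"
  proof -
    have "lattice_norm \<zeta> = frag_cmul (int \<delta>) \<zeta>"
      by (rule lattice_norm_fixed[OF \<zeta>(2)])
    also have "\<dots> = frag_cmul (int q) (frag_cmul (int p) \<zeta>)"
      by (simp add: \<delta> mult.commute)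
    also have "\<dots> = lincomb b r (\<lambda>j. int q * a j)"
      by (simp only: a lincomb_cmul)
    finally show ?thesis
      by (simp add: \<psi>_def \<mu>(2))
  qed
  moreover have "\<not> int p dvd int q * a i"
    using p i(2) by (simp add: prime_dvd_mult_iff)
  ultimately show ?thesis
    using that by metis
qed

lemma invariant_functional_coprime:
  assumes \<delta>: "squarefree \<delta>" and \<zeta>: "\<zeta> \<in> int_lattice n" "\<tau> \<zeta> = \<zeta>"
    and not_norm: "\<And>p q. Factorial_Ring.prime p \<Longrightarrow> \<delta> = p * q \<Longrightarrow> \<zeta> \<notin> orbit_sum q p ` int_lattice n"
  obtains \<psi> where "invariant_functional \<psi>" "coprime (\<psi> \<zeta>) (int \<delta>)"
proof -
  let ?E = "(\<lambda>\<psi>. \<psi> \<zeta>) ` Collect invariant_functional"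
  have "is_add_subgroup ?E"
    unfolding is_add_subgroup_def
    using invariant_functional_zero invariant_functional_diff by (auto intro!: image_eqI)
  then obtain d where d: "?E = {x. d dvd x}"
    by (rule int_add_subgroup_eq_multiples)
  then obtain \<psi> where \<psi>: "invariant_functional \<psi>" "\<psi> \<zeta> = d"
    by (metis (mono_tags, lifting) dvd_refl image_iff mem_Collect_eq)
  have "coprime d (int \<delta>)"
  proof (rule coprime_of_nat_if_no_common_prime)
    show "\<delta> \<noteq> 0"
      using \<delta> not_squarefree_0 by metis
    fix p assume p: "Factorial_Ring.prime p" "p dvd \<delta>"
    then obtain q where q: "\<delta> = p * q"
      by blast
    then have "\<not> p dvd q"
      using \<delta> p(1) squarefree_prime_not_dvd_cofactor by metis
    then obtain \<psi>' where "invariant_functional \<psi>'" "\<not> int p dvd \<psi>' \<zeta>"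
      using invariant_functional_not_dvd[OF q p(1) _ \<zeta> not_norm[OF p(1) q]] by blast
    moreover from this(1) have "d dvd \<psi>' \<zeta>"
      using d by blast
    ultimately show "\<not> int p dvd d"
      by (meson dvd_trans)
  qed
  then show ?thesis
    using that \<psi> by blast
qed

(* If \<psi>\<^sub>0 vanishes, then \<delta> = 1 and \<tau> is the identity, so a coordinate functional will do;
   otherwise divide \<psi>\<^sub>0 by the generator of its image. *)
lemma surjective_invariant_functional:
  assumes n: "n > 0" and \<delta>: "squarefree \<delta>" and \<zeta>: "\<zeta> \<in> int_lattice n" "\<tau> \<zeta> = \<zeta>"
    and not_norm: "\<And>p q. Factorial_Ring.prime p \<Longrightarrow> \<delta> = p * q \<Longrightarrow> \<zeta> \<notin> orbit_sum q p ` int_lattice n"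
  obtains \<psi> where "invariant_functional \<psi>" "coprime (\<psi> \<zeta>) (int \<delta>)" "\<psi> ` int_lattice n = UNIV"
proof -
  obtain \<psi>\<^sub>0 where \<psi>\<^sub>0: "invariant_functional \<psi>\<^sub>0" "coprime (\<psi>\<^sub>0 \<zeta>) (int \<delta>)"
    using invariant_functional_coprime[OF \<delta> \<zeta> not_norm] by blast
  then have additive\<^sub>0: "additive_on (int_lattice n) \<psi>\<^sub>0"
    by (simp add: invariant_functional_def)
  have "is_add_subgroup (\<psi>\<^sub>0 ` int_lattice n)"
    by (rule add_subgroup_image[OF add_subgroup_int_lattice])
      (rule additive_on_diff[OF add_subgroup_int_lattice additive\<^sub>0])
  then obtain D where D: "\<psi>\<^sub>0 ` int_lattice n = {x. D dvd x}"
    by (rule int_add_subgroup_eq_multiples)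
  show ?thesis
  proof (cases "D = 0")
    case True
    then have "\<psi>\<^sub>0 \<zeta> = 0"
      using D \<zeta>(1) by (metis dvd_0_left_iff image_eqI mem_Collect_eq)
    then have "\<delta> = 1"
      using \<psi>\<^sub>0(2) by simp
    then have "\<tau> x = x" if "x \<in> int_lattice n" for x
      using periodic[OF that] by simp
    then have "invariant_functional (\<lambda>x. Poly_Mapping.lookup x 0)"
      by (simp add: invariant_functional_def additive_on_def lookup_add)
    then show ?thesis
      using that \<open>\<delta> = 1\<close> lookup_image_int_lattice[OF n] by simp
  next
    case False
    let ?\<psi> = "\<lambda>x. \<psi>\<^sub>0 x div D"
    have "D dvd \<psi>\<^sub>0 \<zeta>"
      using D \<zeta>(1) by (metis image_eqI mem_Collect_eq)
    then have "coprime (?\<psi> \<zeta>) (int \<delta>)"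
      using \<psi>\<^sub>0(2) by (metis coprime_mult_left_iff dvd_mult_div_cancel)
    moreover have "invariant_functional ?\<psi>"
      using \<psi>\<^sub>0(1) additive_on_div[OF add_subgroup_int_lattice additive\<^sub>0 D]
      by (simp add: invariant_functional_def)
    ultimately show ?thesis
      using that image_additive_on_div[OF add_subgroup_int_lattice additive\<^sub>0 D False] by blast
  qed
qed

end

section \<open>Homomorphisms to the integers and cyclic quotients\<close>

lemma (in group) hom_integer_group_int_pow:
  "h \<in> hom G integer_group \<Longrightarrow> x \<in> carrier G \<Longrightarrow> h (x [^] (k::int)) = k * h x"
  by (simp add: hom_int_pow)

lemma (in group) kernel_inter_generate:
  assumes h: "h \<in> hom G integer_group" and z: "z \<in> carrier G" "h z \<noteq> 0"
  shows "kernel G integer_group h \<inter> generate G {z} = {\<one>}"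
proof
  show "kernel G integer_group h \<inter> generate G {z} \<subseteq> {\<one>}"
    using hom_integer_group_int_pow[OF h z(1)] z(2) generate_pow[OF z(1)] by (auto simp: kernel_def)
  show "{\<one>} \<subseteq> kernel G integer_group h \<inter> generate G {z}"
    using h by (auto simp: kernel_def generate.one hom_one)
qed

lemma (in group) kernel_mult_generate:
  assumes h: "h \<in> hom G integer_group" and H: "subgroup H G"
    and ker: "kernel G integer_group h \<subseteq> H" and z: "z \<in> H"
    and dvd: "\<And>x. x \<in> H \<Longrightarrow> h z dvd h x"
  shows "kernel G integer_group h <#> generate G {z} = H"
proof
  have zG: "z \<in> carrier G"
    using H z subgroup.subset by blast
  have gen: "generate G {z} = range (\<lambda>k::int. z [^] k)"
    using generate_pow[OF zG] by auto
  show "kernel G integer_group h <#> generate G {z} \<subseteq> H"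
    using ker subgroup_int_pow_closed[OF H z] subgroup.m_closed[OF H]
    by (auto simp: gen set_mult_def)
  show "H \<subseteq> kernel G integer_group h <#> generate G {z}"
  proof
    fix x assume x: "x \<in> H"
    then have xG: "x \<in> carrier G"
      using H subgroup.subset by blast
    obtain k where k: "h x = k * h z"
      using dvd[OF x] by (metis dvdE mult.commute)
    have "h (x \<otimes> z [^] (- k)) = 0"
      using h xG zG k hom_integer_group_int_pow[OF h zG] by (simp add: hom_mult)
    then have "x \<otimes> z [^] (- k) \<in> kernel G integer_group h"
      using xG zG by (simp add: kernel_def)
    moreover have "x = (x \<otimes> z [^] (- k)) \<otimes> z [^] k"
      using xG zG by (simp add: m_assoc int_pow_mult[symmetric])
    ultimately show "x \<in> kernel G integer_group h <#> generate G {z}"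
      unfolding set_mult_def gen by blast
  qed
qed

lemma (in group) subgroup_generated_iso_integer_group:
  assumes h: "h \<in> hom G integer_group" and z: "z \<in> carrier G" "h z \<noteq> 0"
  shows "subgroup_generated G {z} \<cong> integer_group"
proof -
  let ?S = "subgroup_generated G {z}"
  have carrier: "carrier ?S = range (\<lambda>k::int. z [^] k)"
    by (rule carrier_subgroup_generated_by_singleton[OF z(1)])
  have "(\<lambda>k::int. z [^] k) \<in> hom integer_group ?S"
    using hom_integer_group_pow[OF z(1)] carrier by (auto simp: hom_into_subgroup_eq_gen)
  moreover have "inj (\<lambda>k::int. z [^] k)"
    using hom_integer_group_int_pow[OF h z(1)] z(2) by (metis injI mult_right_cancel)
  ultimately have "(\<lambda>k::int. z [^] k) \<in> iso integer_group ?S"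
    using carrier by (simp add: iso_def bij_betw_def)
  then show ?thesis
    by (simp add: group.iso_sym is_isoI)
qed

lemma (in group) iso_restrict_subgroup_generated:
  assumes f: "f \<in> iso (subgroup_generated G M) H"
    and N: "subgroup N G" "N \<subseteq> M" and fN: "subgroup (f ` N) H"
  shows "subgroup_generated G N \<cong> subgroup_generated H (f ` N)"
proof -
  have carrier_N: "carrier (subgroup_generated G N) = N"
    using N(1) by (rule subgroup.carrier_subgroup_generated_subgroup)
  have carrier_fN: "carrier (subgroup_generated H (f ` N)) = f ` N"
    using fN by (rule subgroup.carrier_subgroup_generated_subgroup)
  have N_M: "N \<subseteq> carrier (subgroup_generated G M)"
    using N subgroup.subset[OF N(1)] by (auto simp: carrier_subgroup_generated intro: generate.incl)
  have "f \<in> iso (subgroup_generated G N) (subgroup_generated H (f ` N))"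
  proof (rule isoI)
    have "f \<in> hom (subgroup_generated G M) H"
      using f by (simp add: iso_def)
    then show "f \<in> hom (subgroup_generated G N) (subgroup_generated H (f ` N))"
      using N_M unfolding hom_def carrier_N carrier_fN
      by (auto simp: subgroup_generated_def subset_iff)
    have "inj_on f (carrier (subgroup_generated G M))"
      using f by (simp add: iso_def bij_betw_def)
    then show "bij_betw f (carrier (subgroup_generated G N)) (carrier (subgroup_generated H (f ` N)))"
      unfolding carrier_N carrier_fN using N_M by (simp add: bij_betw_def inj_on_subset)
  qed
  then show ?thesis
    by (rule is_isoI)
qed

lemma (in normal) rcos_eq_self_iff: "a \<in> carrier G \<Longrightarrow> H #> a = H \<longleftrightarrow> a \<in> H"
  using coset_join1[OF _ _ subgroup_axioms] coset_join2[OF _ subgroup_axioms] by blast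

lemma (in normal) cyclic_quotient_generator:
  assumes "cyclic_group (G Mod H)" "order (G Mod H) = \<delta>"
  obtains c where "c \<in> carrier G" "\<And>g. g \<in> carrier G \<Longrightarrow> \<exists>m\<in>H. \<exists>k::int. g = m \<otimes> c [^] k"
    "\<And>k::int. c [^] k \<in> H \<longleftrightarrow> int \<delta> dvd k"
proof -
  interpret Q: group "G Mod H"
    by (rule factorgroup_is_group)
  obtain x where x: "x \<in> carrier (G Mod H)" "carrier (G Mod H) = range (\<lambda>k::int. x [^]\<^bsub>G Mod H\<^esub> k)"
    using assms(1) Q.cyclic_group by blast
  then obtain c where c: "c \<in> carrier G" "x = H #> c"
    by (auto simp: FactGroup_def RCOSETS_def)
  have "Q.ord x = order (G Mod H)"
    using Q.cyclic_order_is_ord[OF x(1)] Q.carrier_subgroup_generated_by_singleton[OF x(1)] x(2)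
    by (simp add: order_def)
  then have ord_x: "Q.ord x = \<delta>"
    using assms by simp
  have pow_in: "c [^] k \<in> H \<longleftrightarrow> int \<delta> dvd k" for k :: int
  proof -
    have "c [^] k \<in> H \<longleftrightarrow> H #> c [^] k = H"
      using rcos_eq_self_iff c(1) by simp
    also have "\<dots> \<longleftrightarrow> x [^]\<^bsub>G Mod H\<^esub> k = \<one>\<^bsub>G Mod H\<^esub>"
      using FactGroup_int_pow[OF c(1)] c(2) by simp
    also have "\<dots> \<longleftrightarrow> int \<delta> dvd k"
      using Q.int_pow_eq_id[OF x(1)] ord_x by simp
    finally show ?thesis .
  qed
  have "\<exists>m\<in>H. \<exists>k::int. g = m \<otimes> c [^] k" if g: "g \<in> carrier G" for g
  proof -
    have "H #> g \<in> carrier (G Mod H)"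
      using g by (auto simp: FactGroup_def RCOSETS_def)
    then obtain k :: int where "H #> g = H #> c [^] k"
      using x(2) c FactGroup_int_pow[OF c(1)] by auto
    then have "g \<otimes> inv (c [^] k) \<in> H"
      using rcos_eq_self_iff g c(1) coset_mult_inv2[OF _ g _ subset] by simp
    moreover have "g = (g \<otimes> inv (c [^] k)) \<otimes> c [^] k"
      using g c(1) by (simp add: m_assoc)
    ultimately show ?thesis
      by blast
  qed
  then show ?thesis
    using that c(1) pow_in by blast
qed

lemma (in normal) pow_order_quotient_in:
  assumes "x \<in> carrier G"
  shows "x [^] order (G Mod H) \<in> H"
proof -
  interpret Q: group "G Mod H"
    by (rule factorgroup_is_group)
  have "H #> x \<in> carrier (G Mod H)"
    using assms by (auto simp: FactGroup_def RCOSETS_def)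
  then have "(H #> x) [^]\<^bsub>G Mod H\<^esub> order (G Mod H) = H"
    using Q.pow_order_eq_1 by simp
  then have "H #> x [^] order (G Mod H) = H"
    using FactGroup_pow[OF assms] by simp
  then show ?thesis
    using rcos_eq_self_iff assms by simp
qed

section \<open>Bieberbach groups with cyclic holonomy of squarefree order\<close>

(* G plays the role of \<Gamma>; the image of c generates the holonomy group G Mod M of order \<delta>. *)
locale cyclic_holonomy = group G for G :: "('a, 'b) monoid_scheme" (structure) +
  fixes M :: "'a set" and f :: "'a \<Rightarrow> zvec" and n :: nat and c :: 'a and \<delta> :: nat
  assumes M_normal: "M \<lhd> G"
    and M_abelian: "abelian_subset G M"
    and coordinates: "f \<in> iso (subgroup_generated G M) (free_Abelian_group {..<n})"
    and rank_pos: "n > 0"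
    and generator: "c \<in> carrier G"
    and coset_decomp: "\<And>g. g \<in> carrier G \<Longrightarrow> \<exists>m\<in>M. \<exists>k::int. g = m \<otimes> c [^] k"
    and generator_pow_in_M: "\<And>k::int. c [^] k \<in> M \<longleftrightarrow> int \<delta> dvd k"
    and pow_order_in_M: "\<And>x. x \<in> carrier G \<Longrightarrow> x [^] \<delta> \<in> M"
    and no_torsion: "torsion_free G"
    and squarefree_order: "squarefree \<delta>"
begin

lemma order_pos: "\<delta> > 0"
  using squarefree_order not_squarefree_0 by (metis gr0I)

lemma M_subgroup: "subgroup M G"
  using M_normal by (rule normal_imp_subgroup)

lemma M_carrier: "x \<in> M \<Longrightarrow> x \<in> carrier G"
  using M_subgroup subgroup.subset by blast

lemma carrier_M: "carrier (subgroup_generated G M) = M"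
  using M_subgroup by (rule subgroup.carrier_subgroup_generated_subgroup)

lemma M_mult: "x \<in> M \<Longrightarrow> y \<in> M \<Longrightarrow> x \<otimes> y \<in> M"
  by (rule subgroup.m_closed[OF M_subgroup])

lemma M_inv: "x \<in> M \<Longrightarrow> inv x \<in> M"
  by (rule subgroup.m_inv_closed[OF M_subgroup])

lemma M_comm: "x \<in> M \<Longrightarrow> y \<in> M \<Longrightarrow> x \<otimes> y = y \<otimes> x"
  using M_abelian by (simp add: abelian_subset_def)

lemma f_hom: "f \<in> hom (subgroup_generated G M) (free_Abelian_group {..<n})"
  using coordinates by (simp add: iso_def)

lemma f_mult: "x \<in> M \<Longrightarrow> y \<in> M \<Longrightarrow> f (x \<otimes> y) = f x + f y"
  using hom_mult[OF f_hom] by (simp add: carrier_M)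

lemma f_bij: "bij_betw f M (int_lattice n)"
  using coordinates by (simp add: iso_def carrier_M int_lattice_def)

lemma f_in_lattice: "x \<in> M \<Longrightarrow> f x \<in> int_lattice n"
  using f_bij bij_betwE by blast

lemma f_inj: "x \<in> M \<Longrightarrow> y \<in> M \<Longrightarrow> f x = f y \<Longrightarrow> x = y"
  using f_bij by (meson bij_betw_def inj_onD)

lemma f_one: "f \<one> = 0"
  using hom_one[OF f_hom] by simp

definition lift :: "zvec \<Rightarrow> 'a" where
  "lift y = the_inv_into M f y"

lemma lift: "y \<in> int_lattice n \<Longrightarrow> lift y \<in> M \<and> f (lift y) = y"
  using f_bij unfolding lift_def bij_betw_def
  by (metis f_the_inv_into_f subset_refl the_inv_into_into)

lemma lift_f: "m \<in> M \<Longrightarrow> lift (f m) = m"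
  using lift f_in_lattice f_inj by blast

definition conjugate :: "int \<Rightarrow> 'a \<Rightarrow> 'a" where
  "conjugate k x = c [^] k \<otimes> x \<otimes> inv (c [^] k)"

lemma conjugate_in_M: "x \<in> M \<Longrightarrow> conjugate k x \<in> M"
  unfolding conjugate_def using generator by (intro normal.inv_op_closed2[OF M_normal]) simp

lemma conjugate_mult:
  "x \<in> carrier G \<Longrightarrow> y \<in> carrier G \<Longrightarrow> conjugate k (x \<otimes> y) = conjugate k x \<otimes> conjugate k y"
  unfolding conjugate_def using generator by (simp add: m_assoc[symmetric]) (simp add: m_assoc)

lemma conjugate_conjugate: "x \<in> carrier G \<Longrightarrow> conjugate a (conjugate b x) = conjugate (a + b) x"
  unfolding conjugate_def using generator by (simp add: int_pow_mult inv_mult_group m_assoc)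

lemma conjugate_0: "x \<in> carrier G \<Longrightarrow> conjugate 0 x = x"
  by (simp add: conjugate_def)

lemma conjugate_period: "x \<in> M \<Longrightarrow> conjugate (int \<delta>) x = x"
  unfolding conjugate_def using generator generator_pow_in_M[of "int \<delta>"] M_comm M_carrier
  by (simp add: m_assoc)

definition \<tau> :: "zvec \<Rightarrow> zvec" where
  "\<tau> y = f (conjugate 1 (lift y))"

lemma funpow_\<tau>: "m \<in> M \<Longrightarrow> (\<tau> ^^ j) (f m) = f (conjugate (int j) m)"
proof (induction j)
  case 0
  then show ?case by (simp add: conjugate_0 M_carrier)
next
  case (Suc j)
  then show ?case
    using conjugate_in_M lift_f M_carrier by (simp add: \<tau>_def conjugate_conjugate add.commute)
qed

sublocale periodic_lattice_map n \<tau> \<delta>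
proof
  fix x assume x: "x \<in> int_lattice n"
  then have m: "lift x \<in> M" "f (lift x) = x"
    using lift by auto
  show "\<tau> x \<in> int_lattice n"
    using m by (simp add: \<tau>_def conjugate_in_M f_in_lattice)
  show "(\<tau> ^^ \<delta>) x = x"
    using funpow_\<tau>[OF m(1), of \<delta>] m by (simp add: conjugate_period)
next
  show "additive_on (int_lattice n) \<tau>"
    unfolding additive_on_def
  proof (intro ballI)
    fix x y assume "x \<in> int_lattice n" "y \<in> int_lattice n"
    then have "lift x \<in> M" "lift y \<in> M" "f (lift x) = x" "f (lift y) = y"
      using lift by auto
    then have "lift (x + y) = lift x \<otimes> lift y"
      using lift_f M_mult by (metis f_mult)
    then show "\<tau> (x + y) = \<tau> x + \<tau> y"
      using \<open>lift x \<in> M\<close> \<open>lift y \<in> M\<close>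
      by (simp add: \<tau>_def conjugate_mult M_carrier f_mult conjugate_in_M)
  qed
qed

definition \<zeta> :: zvec where
  "\<zeta> = f (c [^] \<delta>)"

lemma generator_pow_order_in_M: "c [^] \<delta> \<in> M"
  using generator_pow_in_M[of "int \<delta>"] by (simp add: int_pow_int)

lemma \<zeta>_in_lattice: "\<zeta> \<in> int_lattice n"
  by (simp add: \<zeta>_def f_in_lattice generator_pow_order_in_M)

lemma \<tau>_\<zeta>: "\<tau> \<zeta> = \<zeta>"
proof -
  have "c \<otimes> c [^] \<delta> = c [^] \<delta> \<otimes> c"
    using generator by (metis int_pow_1 int_pow_int int_pow_mult add.commute)
  then have "conjugate 1 (c [^] \<delta>) = c [^] \<delta>"
    unfolding conjugate_def using generator by (simp add: m_assoc)
  then show ?thesis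
    by (simp add: \<tau>_def \<zeta>_def lift_f generator_pow_order_in_M)
qed

(* (m c^q)^j = (c^0 m c^0) (c^q m c^-q) ... (c^(q(j-1)) m c^-(q(j-1))) c^(qj) *)
lemma twisted_power:
  assumes m: "m \<in> M"
  shows "(m \<otimes> c [^] int q) [^] j \<otimes> inv (c [^] int (q * j)) \<in> M
    \<and> f ((m \<otimes> c [^] int q) [^] j \<otimes> inv (c [^] int (q * j))) = orbit_sum q j (f m)"
proof (induction j)
  case 0
  then show ?case
    using subgroup.one_closed[OF M_subgroup] by (simp add: f_one orbit_sum_def)
next
  case (Suc j)
  define P where "P = (m \<otimes> c [^] int q) [^] j"
  define W where "W = c [^] int (q * j)"
  have carrier: "P \<in> carrier G" "W \<in> carrier G" "m \<in> carrier G" "c [^] int q \<in> carrier G"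
    using m generator by (simp_all add: P_def W_def M_carrier)
  have cancel: "a \<otimes> (inv a \<otimes> b) = b" "inv a \<otimes> (a \<otimes> b) = b"
    if "a \<in> carrier G" "b \<in> carrier G" for a b
    using that by (simp_all add: m_assoc[symmetric])
  have "c [^] int (q * Suc j) = W \<otimes> c [^] int q"
    using generator by (simp add: W_def int_pow_mult[symmetric] algebra_simps)
  then have split: "(m \<otimes> c [^] int q) [^] Suc j \<otimes> inv (c [^] int (q * Suc j))
      = (P \<otimes> inv W) \<otimes> conjugate (int (q * j)) m"
    using carrier by (simp add: P_def W_def conjugate_def inv_mult_group m_assoc cancel)
  have IH: "P \<otimes> inv W \<in> M" "f (P \<otimes> inv W) = orbit_sum q j (f m)"
    using Suc.IH by (simp_all add: P_def W_def)
  have "f ((P \<otimes> inv W) \<otimes> conjugate (int (q * j)) m) = orbit_sum q (Suc j) (f m)"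
    using IH m by (simp add: f_mult conjugate_in_M funpow_\<tau> orbit_sum_def)
  then show ?case
    unfolding split using IH(1) m by (simp add: M_mult conjugate_in_M)
qed

lemma \<zeta>_not_orbit_sum:
  assumes p: "Factorial_Ring.prime p" and \<delta>: "\<delta> = p * q" and y: "y \<in> int_lattice n"
  shows "orbit_sum q p y \<noteq> \<zeta>"
proof
  assume sum: "orbit_sum q p y = \<zeta>"
  define m where "m = lift (- y)"
  have m: "m \<in> M" "f m = - y"
    using lift add_subgroup_uminus[OF add_subgroup_int_lattice y] by (simp_all add: m_def)
  define x where "x = m \<otimes> c [^] int q"
  have x: "x \<in> carrier G"
    using m generator by (simp add: x_def M_carrier)
  have "c [^] int (q * p) = c [^] \<delta>"
    by (metis \<delta> int_pow_int mult.commute of_nat_mult)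
  then have twisted: "x [^] p \<otimes> inv (c [^] \<delta>) \<in> M" "f (x [^] p \<otimes> inv (c [^] \<delta>)) = - \<zeta>"
    using twisted_power[OF m(1), of q p] sum m(2) y
    by (simp_all add: x_def additive_on_uminus[OF add_subgroup_int_lattice additive_orbit_sum])
  have x_pow: "x [^] p = (x [^] p \<otimes> inv (c [^] \<delta>)) \<otimes> c [^] \<delta>"
    using x generator by (simp add: m_assoc)
  have "x [^] p \<in> M"
    by (subst x_pow) (rule M_mult[OF twisted(1) generator_pow_order_in_M])
  moreover have "f (x [^] p) = 0"
    by (subst x_pow, subst f_mult[OF twisted(1) generator_pow_order_in_M]) (simp add: twisted(2) \<zeta>_def)
  ultimately have "x [^] p = \<one>"
    using f_inj subgroup.one_closed[OF M_subgroup] f_one by metis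
  then have "x = \<one>"
    using no_torsion x prime_gt_0_nat[OF p] unfolding torsion_free_def by blast
  moreover have "c [^] int q = inv m \<otimes> x"
    using m(1) generator by (simp add: x_def M_carrier m_assoc[symmetric])
  ultimately have "c [^] int q = inv m"
    using m(1) by (simp add: M_carrier)
  then have "int \<delta> dvd int q"
    using generator_pow_in_M[of "int q"] M_inv[OF m(1)] by simp
  moreover have "q > 0"
    using order_pos \<delta> by (metis gr0I mult_0_right less_irrefl)
  ultimately show False
    using \<delta> prime_gt_1_nat[OF p] by (simp add: dvd_imp_le)
qed

lemma invariant_functional_exists:
  obtains \<psi> where "invariant_functional \<psi>" "coprime (\<psi> \<zeta>) (int \<delta>)" "\<psi> ` int_lattice n = UNIV"
proof -
  have "\<zeta> \<notin> orbit_sum q p ` int_lattice n" if "Factorial_Ring.prime p" "\<delta> = p * q" for p q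
  proof
    assume "\<zeta> \<in> orbit_sum q p ` int_lattice n"
    then obtain y where y: "y \<in> int_lattice n" "\<zeta> = orbit_sum q p y"
      by blast
    then show False
      using \<zeta>_not_orbit_sum[OF that y(1)] by simp
  qed
  then show thesis
    using surjective_invariant_functional[OF rank_pos squarefree_order \<zeta>_in_lattice \<tau>_\<zeta>] that by blast
qed

end

locale cyclic_holonomy_functional = cyclic_holonomy +
  fixes \<psi> :: "zvec \<Rightarrow> int"
  assumes \<psi>_invariant: "invariant_functional \<psi>"
    and \<psi>_coprime: "coprime (\<psi> \<zeta>) (int \<delta>)"
    and \<psi>_surj: "\<psi> ` int_lattice n = UNIV"
begin

definition height :: "'a \<Rightarrow> int" where
  "height m = \<psi> (f m)"

lemma \<psi>_additive: "additive_on (int_lattice n) \<psi>"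
  using \<psi>_invariant by (simp add: invariant_functional_def)

lemma height_mult: "x \<in> M \<Longrightarrow> y \<in> M \<Longrightarrow> height (x \<otimes> y) = height x + height y"
  by (simp add: height_def f_mult f_in_lattice additive_onD[OF \<psi>_additive])

lemma height_hom: "height \<in> hom (subgroup_generated G M) integer_group"
  by (rule homI) (simp_all add: carrier_M height_mult)

lemma height_int_pow: "x \<in> M \<Longrightarrow> height (x [^] (k::int)) = k * height x"
  using group.hom_integer_group_int_pow[OF group_subgroup_generated height_hom, of x k]
  by (simp add: carrier_M int_pow_subgroup_generated)

lemma height_conjugate_1:
  assumes "x \<in> M"
  shows "height (conjugate 1 x) = height x"
proof -
  have "\<psi> (\<tau> (f x)) = \<psi> (f x)"
    using \<psi>_invariant f_in_lattice[OF assms] by (simp add: invariant_functional_def)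
  then show ?thesis
    using funpow_\<tau>[OF assms, of 1] by (simp add: height_def)
qed

lemma height_conjugate: "x \<in> M \<Longrightarrow> height (conjugate k x) = height x"
proof (induction k arbitrary: x rule: int_induct[where k = 0])
  case base
  then show ?case by (simp add: conjugate_0 M_carrier)
next
  case (step1 i)
  have "conjugate (i + 1) x = conjugate 1 (conjugate i x)"
    using step1.prems by (simp add: conjugate_conjugate M_carrier add.commute)
  then show ?case
    using step1 conjugate_in_M height_conjugate_1 by simp
next
  case (step2 i)
  have "conjugate i x = conjugate 1 (conjugate (i - 1) x)"
    using step2.prems by (simp add: conjugate_conjugate M_carrier)
  then show ?case
    using step2 conjugate_in_M height_conjugate_1 by metis
qed

lemma height_inv: "x \<in> M \<Longrightarrow> height (inv x) = - height x"
  using height_int_pow[of x "-1"] by (simp add: int_pow_neg M_carrier)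

lemma decomposition_value_unique:
  assumes m: "m \<in> M" "m' \<in> M" and eq: "m \<otimes> c [^] k = m' \<otimes> c [^] k'"
  shows "int \<delta> * height m + k * \<psi> \<zeta> = int \<delta> * height m' + k' * \<psi> \<zeta>"
proof -
  have carrier: "m \<in> carrier G" "m' \<in> carrier G" "c [^] k \<in> carrier G" "c [^] k' \<in> carrier G"
    using m generator by (simp_all add: M_carrier)
  have "inv m' \<otimes> m = inv m' \<otimes> (m \<otimes> c [^] k) \<otimes> inv (c [^] k)"
    using carrier by (simp add: m_assoc)
  also have "\<dots> = inv m' \<otimes> (m' \<otimes> c [^] k') \<otimes> inv (c [^] k)"
    by (simp only: eq)
  also have "\<dots> = c [^] (k' - k)"
    using carrier generator by (simp add: m_assoc[symmetric] int_pow_diff)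
  finally have quotient: "inv m' \<otimes> m = c [^] (k' - k)" .
  then obtain t where t: "k' - k = int \<delta> * t"
    using generator_pow_in_M[of "k' - k"] M_mult[OF M_inv[OF m(2)] m(1)] by (auto elim: dvdE)
  have "c [^] (k' - k) = (c [^] \<delta>) [^] t"
    using generator by (simp add: t int_pow_pow int_pow_int[symmetric])
  then have "height m - height m' = t * \<psi> \<zeta>"
    using quotient m height_mult[OF M_inv[OF m(2)] m(1)] height_inv[OF m(2)]
      height_int_pow[OF generator_pow_order_in_M, of t]
    by (simp add: height_def \<zeta>_def)
  then show ?thesis
    using t by (simp add: algebra_simps)
qed

(* SOME picks a decomposition x = m c^k; by decomposition_value_unique the value does not
   depend on the choice. *)
definition phi :: "'a \<Rightarrow> int" where
  "phi x = (SOME v. \<exists>m\<in>M. \<exists>k::int. x = m \<otimes> c [^] k \<and> v = int \<delta> * height m + k * \<psi> \<zeta>)"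

lemma phi_eq: "m \<in> M \<Longrightarrow> phi (m \<otimes> c [^] k) = int \<delta> * height m + k * \<psi> \<zeta>"
proof -
  assume m: "m \<in> M"
  let ?P = "\<lambda>v. \<exists>m'\<in>M. \<exists>k'::int. m \<otimes> c [^] k = m' \<otimes> c [^] k' \<and> v = int \<delta> * height m' + k' * \<psi> \<zeta>"
  have "?P (int \<delta> * height m + k * \<psi> \<zeta>)"
    using m by blast
  then have "?P (phi (m \<otimes> c [^] k))"
    unfolding phi_def by (rule someI)
  then show ?thesis
    using decomposition_value_unique[OF m] by auto
qed

lemma phi_M: "m \<in> M \<Longrightarrow> phi m = int \<delta> * height m"
  using phi_eq[of m 0] by (simp add: M_carrier)

lemma phi_hom: "phi \<in> hom G integer_group"
proof (rule homI)
  fix x y assume x: "x \<in> carrier G" and y: "y \<in> carrier G"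
  obtain m a where m: "m \<in> M" "x = m \<otimes> c [^] (a::int)"
    using coset_decomp[OF x] by blast
  obtain m' b where m': "m' \<in> M" "y = m' \<otimes> c [^] (b::int)"
    using coset_decomp[OF y] by blast
  have carrier: "m \<in> carrier G" "m' \<in> carrier G" "c [^] a \<in> carrier G" "c [^] b \<in> carrier G"
    using m m' generator by (simp_all add: M_carrier)
  have "x \<otimes> y = (m \<otimes> conjugate a m') \<otimes> c [^] (a + b)"
    using m(2) m'(2) carrier generator
    by (simp add: conjugate_def int_pow_mult m_assoc[symmetric]) (simp add: m_assoc)
  then have "phi (x \<otimes> y) = int \<delta> * (height m + height m') + (a + b) * \<psi> \<zeta>"
    using m(1) m'(1) by (simp add: phi_eq M_mult conjugate_in_M height_mult height_conjugate)
  then show "phi (x \<otimes> y) = phi x \<otimes>\<^bsub>integer_group\<^esub> phi y"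
    using phi_eq m m' by (simp add: algebra_simps)
qed simp

lemma kernel_phi_normal: "kernel G integer_group phi \<lhd> G"
  using phi_hom by (simp add: group_hom.normal_kernel group_hom_axioms_def group_hom_def is_group)

lemma kernel_phi_subset: "kernel G integer_group phi \<subseteq> M"
proof
  fix x assume "x \<in> kernel G integer_group phi"
  then have x: "x \<in> carrier G" "phi x = 0"
    by (simp_all add: kernel_def)
  obtain m k where m: "m \<in> M" "x = m \<otimes> c [^] (k::int)"
    using coset_decomp[OF x(1)] by blast
  have "int \<delta> * height m + k * \<psi> \<zeta> = 0"
    using phi_eq[OF m(1), of k] x(2) m(2) by simp
  then have "int \<delta> dvd k * \<psi> \<zeta>"
    by (metis add.commute add_eq_0_iff dvd_minus_iff dvd_triv_left)
  then have "int \<delta> dvd k"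
    using \<psi>_coprime by (simp add: coprime_commute coprime_dvd_mult_left_iff)
  then show "x \<in> M"
    using generator_pow_in_M m by (simp add: M_mult)
qed

lemma phi_surj:
  obtains c' where "c' \<in> carrier G" "phi c' = 1"
proof -
  obtain u v where "u * \<psi> \<zeta> + v * int \<delta> = 1"
    using \<psi>_coprime bezout_int[of "\<psi> \<zeta>" "int \<delta>"] by auto
  moreover obtain y where y: "y \<in> int_lattice n" "\<psi> y = v"
    using \<psi>_surj by (metis UNIV_I imageE)
  ultimately have "phi (lift y \<otimes> c [^] u) = 1"
    using lift[OF y(1)] by (simp add: phi_eq height_def algebra_simps)
  moreover have "lift y \<otimes> c [^] u \<in> carrier G"
    using lift[OF y(1)] generator by (simp add: M_carrier)
  ultimately show thesis
    using that by blast
qed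

lemma kernel_phi_rank: "free_abelian_of_rank G (kernel G integer_group phi) (n - 1)"
proof -
  let ?N = "kernel G integer_group phi" and ?K = "{y \<in> int_lattice n. \<psi> y = 0}"
  have N: "subgroup ?N G"
    using kernel_phi_normal by (rule normal_imp_subgroup)
  have "f ` ?N = ?K"
  proof
    show "f ` ?N \<subseteq> ?K"
    proof
      fix y assume "y \<in> f ` ?N"
      then obtain x where x: "x \<in> ?N" "y = f x"
        by blast
      then have "x \<in> M"
        using kernel_phi_subset by blast
      then show "y \<in> ?K"
        using x order_pos by (simp add: f_in_lattice kernel_def phi_M height_def)
    qed
    show "?K \<subseteq> f ` ?N"
    proof
      fix y assume y: "y \<in> ?K"
      then have "lift y \<in> ?N"
        using lift by (simp add: kernel_def phi_M height_def M_carrier)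
      then show "y \<in> f ` ?N"
        using lift y by force
    qed
  qed
  moreover have "subgroup ?K (free_Abelian_group {..<n})"
    using add_subgroup_kernel[OF add_subgroup_int_lattice \<psi>_additive]
    by (rule add_subgroup_imp_subgroup) (auto simp: int_lattice_def)
  ultimately have "subgroup_generated G ?N \<cong> subgroup_generated (free_Abelian_group {..<n}) ?K"
    using iso_restrict_subgroup_generated[OF coordinates N kernel_phi_subset] by simp
  moreover obtain y where "y \<in> int_lattice n" "\<psi> y = 1"
    using \<psi>_surj by (metis UNIV_I imageE)
  then have "subgroup_generated (free_Abelian_group {..<n}) ?K \<cong> free_Abelian_group {..<n - 1}"
    by (rule kernel_functional_iso[OF \<psi>_additive])
  ultimately show ?thesis
    using N by (auto simp: free_abelian_of_rank_def intro: iso_trans)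
qed

lemma kernel_phi_complement:
  assumes c': "c' \<in> carrier G" "phi c' = 1"
  shows "kernel G integer_group phi \<inter> generate G {c'} = {\<one>}"
    and "kernel G integer_group phi <#> generate G {c'} = carrier G"
  using kernel_inter_generate[OF phi_hom c'(1)] kernel_mult_generate[OF phi_hom subgroup_self _ c'(1)] c'(2)
  by (auto simp: kernel_def)

lemma phi_pow_order: "c' \<in> carrier G \<Longrightarrow> phi c' = 1 \<Longrightarrow> phi (c' [^] \<delta>) = int \<delta>"
  using hom_integer_group_int_pow[OF phi_hom, of c' "int \<delta>"] by (simp add: int_pow_int)

lemma kernel_phi_complement_in_M:
  assumes c': "c' \<in> carrier G" "phi c' = 1"
  shows "kernel G integer_group phi \<inter> generate G {c' [^] \<delta>} = {\<one>}"
    and "kernel G integer_group phi <#> generate G {c' [^] \<delta>} = M"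
  using kernel_inter_generate[OF phi_hom] kernel_mult_generate[OF phi_hom M_subgroup kernel_phi_subset]
    pow_order_in_M[OF c'(1)] c'(1) phi_pow_order[OF c'] order_pos
  by (simp_all add: phi_M)

lemma pow_order_central:
  assumes c': "c' \<in> carrier G" "phi c' = 1" and g: "g \<in> carrier G"
  shows "g \<otimes> c' [^] \<delta> = c' [^] \<delta> \<otimes> g"
proof -
  let ?z = "c' [^] \<delta>"
  have z: "?z \<in> M" "?z \<in> carrier G"
    using pow_order_in_M[OF c'(1)] c'(1) by simp_all
  obtain a b where ab: "a \<in> kernel G integer_group phi" "b \<in> generate G {c'}" "g = a \<otimes> b"
    using g kernel_phi_complement(2)[OF c'] unfolding set_mult_def by blast
  then obtain k :: int where b: "b = c' [^] k"
    using generate_pow[OF c'(1)] by blast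
  have a: "a \<in> M" "a \<in> carrier G"
    using ab(1) kernel_phi_subset M_carrier by blast+
  have b_carrier: "b \<in> carrier G"
    using c'(1) by (simp add: b)
  have "g \<otimes> ?z = a \<otimes> (b \<otimes> ?z)"
    using a b_carrier z(2) by (simp add: ab(3) m_assoc)
  also have "b \<otimes> ?z = ?z \<otimes> b"
    using c'(1) by (simp add: b int_pow_int[symmetric] int_pow_mult[symmetric] add.commute)
  also have "a \<otimes> (?z \<otimes> b) = (a \<otimes> ?z) \<otimes> b"
    using a b_carrier z(2) by (simp add: m_assoc)
  also have "\<dots> = ?z \<otimes> g"
    using a b_carrier z by (simp only: M_comm[OF a(1) z(1)]) (simp add: ab(3) m_assoc)
  finally show ?thesis .
qed

lemma kernel_splitting:
  "\<exists>N c'. c' \<in> carrier G \<and> N \<lhd> G \<and> N \<subseteq> M \<and> free_abelian_of_rank G N (n - 1)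
      \<and> (\<forall>g \<in> carrier G. g \<otimes> (c' [^] \<delta>) = (c' [^] \<delta>) \<otimes> g)
      \<and> (subgroup_generated G {c' [^] \<delta>} \<cong> integer_group)
      \<and> N \<inter> generate G {c' [^] \<delta>} = {\<one>}
      \<and> N <#> generate G {c' [^] \<delta>} = M
      \<and> N \<inter> generate G {c'} = {\<one>}
      \<and> N <#> generate G {c'} = carrier G"
proof -
  obtain c' where c': "c' \<in> carrier G" "phi c' = 1"
    by (rule phi_surj)
  have "subgroup_generated G {c' [^] \<delta>} \<cong> integer_group"
    using subgroup_generated_iso_integer_group[OF phi_hom] c'(1) phi_pow_order[OF c'] order_pos
    by simp
  then show ?thesis
    using c' kernel_phi_normal kernel_phi_subset kernel_phi_rank kernel_phi_complement[OF c']
      kernel_phi_complement_in_M[OF c'] pow_order_central[OF c']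
    by (intro exI[of _ "kernel G integer_group phi"] exI[of _ c'] conjI ballI) simp_all
qed

end

lemma (in cyclic_holonomy) holonomy_splitting:
  "\<exists>N c'. c' \<in> carrier G \<and> N \<lhd> G \<and> N \<subseteq> M \<and> free_abelian_of_rank G N (n - 1)
      \<and> (\<forall>g \<in> carrier G. g \<otimes> (c' [^] \<delta>) = (c' [^] \<delta>) \<otimes> g)
      \<and> (subgroup_generated G {c' [^] \<delta>} \<cong> integer_group)
      \<and> N \<inter> generate G {c' [^] \<delta>} = {\<one>}
      \<and> N <#> generate G {c' [^] \<delta>} = M
      \<and> N \<inter> generate G {c'} = {\<one>}
      \<and> N <#> generate G {c'} = carrier G"
proof -
  obtain \<psi> where "invariant_functional \<psi>" "coprime (\<psi> \<zeta>) (int \<delta>)" "\<psi> ` int_lattice n = UNIV"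
    by (rule invariant_functional_exists)
  then interpret cyclic_holonomy_functional G M f n c \<delta> \<psi>
    by unfold_locales
  show ?thesis
    by (rule kernel_splitting)
qed

theorem lemma3p1:
  fixes \<Gamma> :: "('a, 'b) monoid_scheme" and M :: "'a set" and n \<delta> :: nat
  assumes "bieberbach_group \<Gamma> M n"
    and "n \<ge> 1"
    and "cyclic_group (\<Gamma> Mod M)"
    and "order (\<Gamma> Mod M) = \<delta>"
    and "squarefree \<delta>"
  shows "\<exists>N c. c \<in> carrier \<Gamma> \<and> N \<lhd> \<Gamma> \<and> N \<subseteq> M \<and> free_abelian_of_rank \<Gamma> N (n - 1)
      \<and> (\<forall>g \<in> carrier \<Gamma>. g \<otimes>\<^bsub>\<Gamma>\<^esub> (c [^]\<^bsub>\<Gamma>\<^esub> \<delta>) = (c [^]\<^bsub>\<Gamma>\<^esub> \<delta>) \<otimes>\<^bsub>\<Gamma>\<^esub> g)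
      \<and> (subgroup_generated \<Gamma> {c [^]\<^bsub>\<Gamma>\<^esub> \<delta>} \<cong> integer_group)
      \<and> N \<inter> generate \<Gamma> {c [^]\<^bsub>\<Gamma>\<^esub> \<delta>} = {\<one>\<^bsub>\<Gamma>\<^esub>}
      \<and> N <#>\<^bsub>\<Gamma>\<^esub> generate \<Gamma> {c [^]\<^bsub>\<Gamma>\<^esub> \<delta>} = M
      \<and> N \<inter> generate \<Gamma> {c} = {\<one>\<^bsub>\<Gamma>\<^esub>}
      \<and> N <#>\<^bsub>\<Gamma>\<^esub> generate \<Gamma> {c} = carrier \<Gamma>"
proof -
  have group: "group \<Gamma>" and torsion: "torsion_free \<Gamma>" and normal: "M \<lhd> \<Gamma>"
    and abelian: "abelian_subset \<Gamma> M" and lattice: "free_abelian_of_rank \<Gamma> M n"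
    using assms(1) by (simp_all add: bieberbach_group_def maximal_abelian_subgroup_def)
  obtain f where f: "f \<in> iso (subgroup_generated \<Gamma> M) (free_Abelian_group {..<n})"
    using lattice by (auto simp: free_abelian_of_rank_def is_iso_def)
  obtain c where "c \<in> carrier \<Gamma>" "\<And>g. g \<in> carrier \<Gamma> \<Longrightarrow> \<exists>m\<in>M. \<exists>k::int. g = m \<otimes>\<^bsub>\<Gamma>\<^esub> c [^]\<^bsub>\<Gamma>\<^esub> k"
    "\<And>k::int. c [^]\<^bsub>\<Gamma>\<^esub> k \<in> M \<longleftrightarrow> int \<delta> dvd k"
    using normal.cyclic_quotient_generator[OF normal assms(3,4)] by blast
  moreover have "\<And>x. x \<in> carrier \<Gamma> \<Longrightarrow> x [^]\<^bsub>\<Gamma>\<^esub> \<delta> \<in> M"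
    using normal.pow_order_quotient_in[OF normal] assms(4) by blast
  ultimately have "cyclic_holonomy \<Gamma> M f n c \<delta>"
    using group normal abelian f assms(2,5) torsion
    by (simp add: cyclic_holonomy_def cyclic_holonomy_axioms_def)
  then interpret cyclic_holonomy \<Gamma> M f n c \<delta> .
  show ?thesis
    by (rule holonomy_splitting)
qed

end
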